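(* Let $\epsilon\in(0,1)$, $\alpha\ge1$, and let $W$ be a mass vector satisfying $(1-\epsilon)H(\theta,\lambda)\le\tilde H(\theta,\lambda)\le(1+\epsilon)H(\theta,\lambda)$ for all $\theta\in\Theta$ and $\lambda\in[\kappa(\theta),\tau(\theta)]$, with $\tilde{\mathbb P}_n=\sum_iw_i\delta_{\xi_i}$. If $\theta_0\in\Theta$ satisfies $R^{\tilde{\mathbb P}_n}_{\sigma,p}(\theta_0)\le\alpha\inf_{\theta\in\Theta}R^{\tilde{\mathbb P}_n}_{\sigma,p}(\theta)$, then $$R^{\mathbb P_n}_{\sigma,p}(\theta_0)\le\alpha\cdot\frac{1+\epsilon}{1-\epsilon}\inf_{\theta\in\Theta}R^{\mathbb P_n}_{\sigma,p}(\theta).$$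
   Context: Setting: $\Xi=\mathbb X\times\mathbb Y$ with $\mathbb X\subseteq\mathbb R^m$, $\mathbb Y\subseteq\mathbb R$, metric $\mathtt d((x,y),(x',y'))=\|x-x'\|+\frac{\gamma}{2}|y-y'|$ ($\|\cdot\|$ a norm on $\mathbb R^m$, $\gamma>0$), $(\Xi,\mathtt d)$ complete. Fix $p\ge1$, $\sigma>0$, data $\xi_1,\dots,\xi_n\in\Xi$ with empirical distribution $\mathbb P_n=\frac1n\sum_i\delta_{\xi_i}$. Loss $\ell:\mathbb R^d\times\Xi\to[0,\infty)$, feasible set $\Theta\subseteq\mathbb R^d$. Assumption: $\ell(\theta,\cdot)$ continuous for each $\theta\in\Theta$, and there are a positive continuous $\mathtt C(\theta)$ and $\xi_0\in\Xi$ with $\ell(\theta,\xi)\le\mathtt C(\theta)(1+\mathtt d^p(\xi,\xi_0))$. The $p$-Wasserstein distance is $W_p(\mathbb P,\mathbb P')=(\inf_{\pi\in\Pi(\mathbb P,\mathbb P')}\int\mathtt d^p(\xi,\xi')\,\pi(d\xi,d\xi'))^{1/p}$; $\mathbb B_{\sigma,p}(\mathbb Q)$ is the set of Borel probability measures on $\Xi$ at $W_p$-distance at most $\sigma$ from $\mathbb Q$; the worst-case risk is $R^{\mathbb Q}_{\sigma,p}(\theta)=\sup_{\mathbb Q'\in\mathbb B_{\sigma,p}(\mathbb Q)}\mathbb E^{\mathbb Q'}[\ell(\theta,\xi)]$. Define $h(\theta,\lambda,\xi)=\sup_{\zeta\in\Xi}\{\ell(\theta,\zeta)-\lambda\mathtt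 d^p(\zeta,\xi)\}$, $h_i(\theta,\lambda)=h(\theta,\lambda,\xi_i)$, $H(\theta,\lambda)=\frac1n\sum_ih_i(\theta,\lambda)$, and for a mass vector $W=[w_1,\dots,w_n]$ ($w_i\ge0,\sum w_i=1$), $\tilde H(\theta,\lambda)=\sum_iw_ih_i(\theta,\lambda)$. Known strong duality (standing fact): for any $\mathbb Q$ with finite $p$-th moment, $R^{\mathbb Q}_{\sigma,p}(\theta)=\inf_{\lambda\ge0}\{\lambda\sigma^p+\mathbb E^{\mathbb Q}[h(\theta,\lambda,\xi)]\}$. Define $\kappa(\theta)=\limsup_{\mathtt d(\xi,\xi_0)\to\infty}\frac{\ell(\theta,\xi)-\ell(\theta,\xi_0)}{\mathtt d^p(\xi,\xi_0)}$; assume $h_i(\theta,\kappa(\theta))<\infty$. Let $\rho=\max_i\mathtt d(\xi_i,\xi_0)$ and $\tau(\theta)=\mathtt C(\theta)(2^{p-1}+\frac{1+2^{p-1}\rho^p}{\sigma^p})$. *)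

theory Defs
  imports "HOL-Probability.Probability"
begin

definition is_norm :: "('a::real_vector \<Rightarrow> real) \<Rightarrow> bool" where
  "is_norm nrm \<longleftrightarrow> (\<forall>x. 0 \<le> nrm x) \<and> (\<forall>x. nrm x = 0 \<longleftrightarrow> x = 0)
     \<and> (\<forall>c x. nrm (c *\<^sub>R x) = \<bar>c\<bar> * nrm x) \<and> (\<forall>x y. nrm (x + y) \<le> nrm x + nrm y)"

definition dxi :: "('a::real_vector \<Rightarrow> real) \<Rightarrow> real \<Rightarrow> ('a \<times> real) \<Rightarrow> ('a \<times> real) \<Rightarrow> real" where
  "dxi nrm \<gamma> u v = nrm (fst u - fst v) + \<gamma> / 2 * \<bar>snd u - snd v\<bar>"

definition d_complete :: "('b \<Rightarrow> 'b \<Rightarrow> real) \<Rightarrow> 'b set \<Rightarrow> bool" where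
  "d_complete d S \<longleftrightarrow> (\<forall>f::nat \<Rightarrow> 'b. (\<forall>k. f k \<in> S) \<longrightarrow>
      (\<forall>e::real>0. \<exists>N::nat. \<forall>m\<ge>N. \<forall>k\<ge>N. d (f m) (f k) < e) \<longrightarrow>
      (\<exists>x\<in>S. \<forall>e::real>0. \<exists>N::nat. \<forall>k\<ge>N. d (f k) x < e))"

text \<open>Borel probability measures on Xi (realised as Borel probability measures on the
  ambient space giving full mass to Xi).\<close>
definition prob_on :: "('b::topological_space) set \<Rightarrow> 'b measure \<Rightarrow> bool" where
  "prob_on S Q \<longleftrightarrow> prob_space Q \<and> sets Q = sets borel \<and> emeasure Q S = 1"

definition couplings :: "('b::topological_space) measure \<Rightarrow> 'b measure \<Rightarrow> ('b \<times> 'b) measure set" where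
  "couplings P P' = {\<pi>. prob_space \<pi> \<and> sets \<pi> = sets borel
       \<and> distr \<pi> borel fst = P \<and> distr \<pi> borel snd = P'}"

definition wass_pow :: "('b::topological_space \<Rightarrow> 'b \<Rightarrow> real) \<Rightarrow> real \<Rightarrow> 'b measure \<Rightarrow> 'b measure \<Rightarrow> ennreal" where
  "wass_pow d p P P' = (INF \<pi>\<in>couplings P P'. \<integral>\<^sup>+ z. ennreal (d (fst z) (snd z) powr p) \<partial>\<pi>)"

text \<open>Wasserstein ball B_{sigma,p}(Q): W_p(Q,Q') <= sigma, i.e. W_p(Q,Q')^p <= sigma^p.\<close>
definition wball :: "('b::topological_space \<Rightarrow> 'b \<Rightarrow> real) \<Rightarrow> 'b set \<Rightarrow> real \<Rightarrow> real \<Rightarrow> 'b measure \<Rightarrow> 'b measure set" where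
  "wball d S p \<sigma> Q = {Q'. prob_on S Q' \<and> wass_pow d p Q Q' \<le> ennreal (\<sigma> powr p)}"

definition wrisk :: "('c \<Rightarrow> 'b::topological_space \<Rightarrow> real) \<Rightarrow> ('b \<Rightarrow> 'b \<Rightarrow> real) \<Rightarrow> 'b set \<Rightarrow> real \<Rightarrow> real
     \<Rightarrow> 'b measure \<Rightarrow> 'c \<Rightarrow> ereal" where
  "wrisk l d S p \<sigma> Q \<theta> = (SUP Q'\<in>wball d S p \<sigma> Q. enn2ereal (\<integral>\<^sup>+ \<xi>. ennreal (l \<theta> \<xi>) \<partial>Q'))"

definition hfun :: "('c \<Rightarrow> 'b \<Rightarrow> real) \<Rightarrow> ('b \<Rightarrow> 'b \<Rightarrow> real) \<Rightarrow> 'b set \<Rightarrow> real \<Rightarrow> 'c \<Rightarrow> real \<Rightarrow> 'b \<Rightarrow> ereal" where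
  "hfun l d S p \<theta> lam \<xi> = (SUP \<zeta>\<in>S. ereal (l \<theta> \<zeta> - lam * d \<zeta> \<xi> powr p))"

definition kappa :: "('c \<Rightarrow> 'b \<Rightarrow> real) \<Rightarrow> ('b \<Rightarrow> 'b \<Rightarrow> real) \<Rightarrow> 'b set \<Rightarrow> real \<Rightarrow> 'b \<Rightarrow> 'c \<Rightarrow> ereal" where
  "kappa l d S p \<xi>0 \<theta> = Limsup (filtercomap (\<lambda>\<xi>. d \<xi> \<xi>0) at_top \<sqinter> principal S)
       (\<lambda>\<xi>. ereal ((l \<theta> \<xi> - l \<theta> \<xi>0) / d \<xi> \<xi>0 powr p))"

definition wemp :: "nat \<Rightarrow> (nat \<Rightarrow> 'b::topological_space) \<Rightarrow> (nat \<Rightarrow> real) \<Rightarrow> 'b measure" where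
  "wemp n \<xi> w = measure_of UNIV (sets borel) (\<lambda>A. \<Sum>i<n. ennreal (w i) * indicator A (\<xi> i))"

end

theory Submission
  imports Defs
begin

text \<open>By strong duality, the worst-case risk around a weighted empirical measure is the infimum over
  \<open>\<lambda> \<ge> 0\<close> of \<open>\<lambda>\<sigma>\<^sup>p + \<Sum>\<^sub>i w\<^sub>i h\<^sub>i(\<theta>, \<lambda>)\<close>. This infimum may be taken over \<open>[\<kappa>(\<theta>), \<tau>(\<theta>)]\<close> only: below \<open>\<kappa>\<close>
  the \<open>h\<^sub>i\<close> are infinite, and above \<open>\<tau>\<close> the term \<open>\<lambda>\<sigma>\<^sup>p\<close> alone exceeds the value of the objective at
  \<open>\<lambda> = C(\<theta>) 2\<^sup>p\<^sup>-\<^sup>1\<close>, which the growth bound controls. On that interval the coreset hypothesis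
  sandwiches the objective for \<open>W\<close> between \<open>1 - \<epsilon>\<close> and \<open>1 + \<epsilon>\<close> times the one for \<open>P\<^sub>n\<close>, so the two
  worst-case risks agree up to these factors for every \<open>\<theta>\<close>, and approximate minimisers transfer.\<close>

lemma powr_add_le:
  fixes x y p :: real
  assumes "0 \<le> x" "0 \<le> y" "1 \<le> p"
  shows "(x + y) powr p \<le> 2 powr (p - 1) * (x powr p + y powr p)"
proof -
  have two: "1 \<le> 2 powr (p - 1)" using assms(3) by (simp add: ge_one_powr_ge_zero)
  consider "x = 0" | "y = 0" | "0 < x" "0 < y" using assms by linarith
  then show ?thesis
  proof cases
    case 3
    have "((1 - 1/2) *\<^sub>R x + (1/2) *\<^sub>R y) powr p \<le> (1 - 1/2) * x powr p + (1/2) * y powr p"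
      using convex_onD[OF powr_convex[OF assms(3)], of "1/2" x y] 3 by auto
    then have h: "((x + y) / 2) powr p \<le> (x powr p + y powr p) / 2" by (simp add: field_simps)
    have "(x + y) powr p = (2 * ((x + y) / 2)) powr p" by (simp only: mult_2 field_sum_of_halves)
    also have "\<dots> = 2 powr p * ((x + y) / 2) powr p" by (rule powr_mult)
    also have "\<dots> \<le> 2 powr p * ((x powr p + y powr p) / 2)" by (rule mult_left_mono) (use h in auto)
    also have "\<dots> = 2 powr (p - 1) * (x powr p + y powr p)" by (simp add: powr_diff)
    finally show ?thesis .
  qed (use two assms in \<open>simp_all add: mult_le_cancel_right1\<close>)
qed

lemma
  assumes "is_norm nrm" "0 < \<gamma>"
  shows dxi_nonneg: "0 \<le> dxi nrm \<gamma> u v"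
    and dxi_self: "dxi nrm \<gamma> u u = 0"
    and dxi_commute: "dxi nrm \<gamma> u v = dxi nrm \<gamma> v u"
    and dxi_triangle: "dxi nrm \<gamma> u w \<le> dxi nrm \<gamma> u v + dxi nrm \<gamma> v w"
    and dxi_eq_0_imp_eq: "dxi nrm \<gamma> u v = 0 \<Longrightarrow> u = v"
proof -
  have nonneg: "\<And>x. 0 \<le> nrm x" and zero: "\<And>x. nrm x = 0 \<longleftrightarrow> x = 0"
    and scale: "\<And>c x. nrm (c *\<^sub>R x) = \<bar>c\<bar> * nrm x" and add: "\<And>x y. nrm (x + y) \<le> nrm x + nrm y"
    using assms(1) unfolding is_norm_def by auto
  show "0 \<le> dxi nrm \<gamma> u v" unfolding dxi_def using nonneg assms(2) by simp
  show "dxi nrm \<gamma> u u = 0" unfolding dxi_def using zero by simp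
  have "nrm (fst u - fst v) = nrm (fst v - fst u)" using scale[of "-1" "fst v - fst u"] by simp
  then show "dxi nrm \<gamma> u v = dxi nrm \<gamma> v u" unfolding dxi_def by (simp add: abs_minus_commute)
  have "nrm (fst u - fst w) \<le> nrm (fst u - fst v) + nrm (fst v - fst w)"
    using add[of "fst u - fst v" "fst v - fst w"] by simp
  moreover have "\<gamma> / 2 * \<bar>snd u - snd w\<bar> \<le> \<gamma> / 2 * (\<bar>snd u - snd v\<bar> + \<bar>snd v - snd w\<bar>)"
    using assms(2) by (intro mult_left_mono) auto
  ultimately show "dxi nrm \<gamma> u w \<le> dxi nrm \<gamma> u v + dxi nrm \<gamma> v w"
    unfolding dxi_def by (simp add: distrib_left)
  assume "dxi nrm \<gamma> u v = 0"
  moreover have "0 \<le> \<gamma> / 2 * \<bar>snd u - snd v\<bar>" using assms(2) by simp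
  ultimately have "nrm (fst u - fst v) = 0" "\<gamma> / 2 * \<bar>snd u - snd v\<bar> = 0"
    unfolding dxi_def using nonneg[of "fst u - fst v"] by linarith+
  then have "nrm (fst u - fst v) = 0" "snd u = snd v" using assms(2) by auto
  then show "u = v" using zero by (simp add: prod_eq_iff)
qed

lemma is_norm_sum_le:
  assumes "is_norm nrm"
  shows "nrm (\<Sum>i\<in>A. f i) \<le> (\<Sum>i\<in>A. nrm (f i))"
proof -
  have "nrm 0 = 0" using assms unfolding is_norm_def by blast
  then show ?thesis
  proof (induction A rule: infinite_finite_induct)
    case (insert x F)
    have "nrm (f x + sum f F) \<le> nrm (f x) + nrm (sum f F)"
      using assms unfolding is_norm_def by blast
    with insert show ?case by simp
  qed simp_all
qed

lemma is_norm_le_norm: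
  fixes nrm :: "'a::euclidean_space \<Rightarrow> real"
  assumes "is_norm nrm"
  shows "nrm x \<le> (\<Sum>b\<in>Basis. nrm b) * norm x"
proof -
  have scale: "\<And>c x. nrm (c *\<^sub>R x) = \<bar>c\<bar> * nrm x" and nonneg: "\<And>x. 0 \<le> nrm x"
    using assms unfolding is_norm_def by auto
  have "nrm x = nrm (\<Sum>b\<in>Basis. (x \<bullet> b) *\<^sub>R b)" by (simp add: euclidean_representation)
  also have "\<dots> \<le> (\<Sum>b\<in>Basis. nrm ((x \<bullet> b) *\<^sub>R b))" by (rule is_norm_sum_le[OF assms])
  also have "\<dots> = (\<Sum>b\<in>Basis. \<bar>x \<bullet> b\<bar> * nrm b)" by (simp add: scale)
  also have "\<dots> \<le> (\<Sum>b\<in>Basis. norm x * nrm b)"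
    by (intro sum_mono mult_right_mono) (auto simp: Basis_le_norm nonneg)
  finally show ?thesis by (simp add: sum_distrib_left mult.commute)
qed

lemma dxi_tendsto_0:
  fixes nrm :: "'a::euclidean_space \<Rightarrow> real"
  assumes "is_norm nrm" "0 < \<gamma>" "x \<longlonglongrightarrow> z"
  shows "(\<lambda>k. dxi nrm \<gamma> (x k) z) \<longlonglongrightarrow> 0"
proof (rule Lim_null_comparison)
  define M where "M = (\<Sum>b\<in>Basis. nrm b)"
  have "(\<lambda>k. M * norm (fst (x k) - fst z) + \<gamma> / 2 * \<bar>snd (x k) - snd z\<bar>)
      \<longlonglongrightarrow> M * norm (fst z - fst z) + \<gamma> / 2 * \<bar>snd z - snd z\<bar>"
    by (intro tendsto_intros tendsto_fst[OF assms(3)] tendsto_snd[OF assms(3)])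
  then show "(\<lambda>k. M * norm (fst (x k) - fst z) + \<gamma> / 2 * \<bar>snd (x k) - snd z\<bar>) \<longlonglongrightarrow> 0"
    by simp
  show "\<forall>\<^sub>F k in sequentially. norm (dxi nrm \<gamma> (x k) z)
      \<le> M * norm (fst (x k) - fst z) + \<gamma> / 2 * \<bar>snd (x k) - snd z\<bar>"
    using dxi_nonneg[OF assms(1,2)] is_norm_le_norm[OF assms(1)] by (simp add: dxi_def M_def)
qed

lemma d_complete_imp_closed:
  fixes d :: "'b::first_countable_topology \<Rightarrow> 'b \<Rightarrow> real"
  assumes complete: "d_complete d S"
    and nonneg: "\<And>u v. 0 \<le> d u v" and commute: "\<And>u v. d u v = d v u"
    and triangle: "\<And>u v w. d u w \<le> d u v + d v w" and eq: "\<And>u v. d u v = 0 \<Longrightarrow> u = v"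
    and tendsto: "\<And>x z. x \<longlonglongrightarrow> z \<Longrightarrow> (\<lambda>k. d (x k) z) \<longlonglongrightarrow> 0"
  shows "closed S"
  unfolding closed_sequential_limits
proof (intro allI impI, elim conjE)
  fix x z assume xS: "\<forall>k. x k \<in> S" and "x \<longlonglongrightarrow> z"
  then have near: "\<exists>N. \<forall>k\<ge>N. d (x k) z < e" if "0 < e" for e
    using order_tendstoD(2)[OF tendsto that] by (simp add: eventually_sequentially)
  have "\<exists>N. \<forall>m\<ge>N. \<forall>k\<ge>N. d (x m) (x k) < e" if "0 < e" for e
  proof -
    obtain N where N: "\<forall>k\<ge>N. d (x k) z < e / 2" using near[of "e / 2"] \<open>0 < e\<close> by auto
    have "d (x m) (x k) < e" if "N \<le> m" "N \<le> k" for m k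
      using N[rule_format, OF that(1)] N[rule_format, OF that(2)]
        triangle[of "x m" "x k" z] commute[of z "x k"] by linarith
    then show ?thesis by blast
  qed
  then obtain y where "y \<in> S" and y: "\<forall>e>0. \<exists>N. \<forall>k\<ge>N. d (x k) y < e"
    using complete xS unfolding d_complete_def by blast
  have "d z y < e" if "0 < e" for e
  proof -
    obtain N1 where N1: "\<forall>k\<ge>N1. d (x k) z < e / 2" using near[of "e / 2"] \<open>0 < e\<close> by auto
    obtain N2 where N2: "\<forall>k\<ge>N2. d (x k) y < e / 2" using y \<open>0 < e\<close> half_gt_zero by blast
    let ?k = "max N1 N2"
    have "d z y \<le> d (x ?k) z + d (x ?k) y"
      using triangle[of z y "x ?k"] commute[of z "x ?k"] by simp
    with N1[rule_format, of ?k] N2[rule_format, of ?k] show ?thesis by simp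
  qed
  then have "d z y = 0" using nonneg[of z y] by (metis less_irrefl order_le_less)
  with \<open>y \<in> S\<close> show "z \<in> S" using eq by blast
qed

text \<open>Closedness makes \<open>\<Xi>\<close> a Borel set, so that empirical measures on the data give it full mass.\<close>
lemma dxi_complete_imp_closed:
  fixes nrm :: "'a::euclidean_space \<Rightarrow> real"
  assumes "is_norm nrm" "0 < \<gamma>" "d_complete (dxi nrm \<gamma>) S"
  shows "closed S"
proof (rule d_complete_imp_closed)
  show "d_complete (dxi nrm \<gamma>) S" by (rule assms(3))
qed (use assms(1,2) in \<open>blast intro: dxi_nonneg dxi_commute dxi_triangle dxi_eq_0_imp_eq dxi_tendsto_0\<close>)+

lemma sets_wemp [measurable_cong]: "sets (wemp n \<xi> v) = sets borel"
  and space_wemp: "space (wemp n \<xi> v) = UNIV"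
  unfolding wemp_def by (simp_all add: sets.sets_measure_of_eq[of borel, simplified])

lemma emeasure_wemp:
  fixes \<xi> :: "nat \<Rightarrow> 'b::topological_space"
  assumes "A \<in> sets borel"
  shows "emeasure (wemp n \<xi> v) A = (\<Sum>i<n. ennreal (v i) * indicator A (\<xi> i))"
proof -
  define \<mu> where "\<mu> = (\<lambda>A. \<Sum>i<n. ennreal (v i) * indicator A (\<xi> i))"
  have "countably_additive (sets borel) \<mu>"
    unfolding countably_additive_def
  proof (intro allI impI)
    fix F :: "nat \<Rightarrow> 'b set" assume "disjoint_family F"
    have "(\<Sum>j. \<mu> (F j)) = (\<Sum>i<n. \<Sum>j. ennreal (v i) * indicator (F j) (\<xi> i))"
      unfolding \<mu>_def by (rule suminf_sum) (rule summableI)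
    also have "\<dots> = \<mu> (\<Union> (range F))"
      using suminf_indicator[OF \<open>disjoint_family F\<close>] by (simp add: \<mu>_def)
    finally show "(\<Sum>j. \<mu> (F j)) = \<mu> (\<Union> (range F))" .
  qed
  moreover have "positive (sets borel) \<mu>" unfolding positive_def \<mu>_def by simp
  moreover have "wemp n \<xi> v = measure_of (space borel) (sets borel) \<mu>" by (simp add: wemp_def \<mu>_def)
  ultimately have "emeasure (wemp n \<xi> v) A = \<mu> A"
    using emeasure_measure_of_sigma[OF sets.sigma_algebra_axioms[of borel, folded sigma_algebra_def] _ _ assms]
    by simp
  then show ?thesis by (simp add: \<mu>_def)
qed

lemma nn_integral_wemp:
  fixes \<xi> :: "nat \<Rightarrow> 'b::t1_space"
  shows "(\<integral>\<^sup>+ x. f x \<partial>wemp n \<xi> v) = (\<Sum>i<n. ennreal (v i) * f (\<xi> i))"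
proof -
  let ?Q = "wemp n \<xi> v"
  define S where "S = \<xi> ` {..<n}"
  have "finite S" by (simp add: S_def)
  then have "- S \<in> sets borel" by (simp add: finite_imp_closed)
  moreover have "emeasure ?Q (- S) = 0" using calculation by (simp add: emeasure_wemp S_def)
  ultimately have "AE x in ?Q. x \<in> S" by (intro AE_I'[of "- S"]) (auto simp: null_sets_def sets_wemp)
  then have "(\<integral>\<^sup>+ x. f x \<partial>?Q) = (\<integral>\<^sup>+ x. f x * indicator S x \<partial>?Q)"
    by (intro nn_integral_cong_AE) (auto elim: eventually_mono)
  also have "\<dots> = (\<Sum>y\<in>S. f y * emeasure ?Q {y})"
    using \<open>finite S\<close> by (intro nn_integral_indicator_finite) (simp_all add: sets_wemp)
  also have "\<dots> = (\<Sum>y\<in>S. \<Sum>i\<in>{i\<in>{..<n}. \<xi> i = y}. ennreal (v i) * f (\<xi> i))"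
    by (intro sum.cong refl)
       (simp add: emeasure_wemp sum.inter_filter sum_distrib_left indicator_def mult.commute Int_def)
  also have "\<dots> = (\<Sum>i<n. ennreal (v i) * f (\<xi> i))"
    unfolding S_def by (rule sum.image_gen[symmetric]) simp
  finally show ?thesis .
qed

lemma enn2ereal_nn_integral_wemp:
  fixes \<xi> :: "nat \<Rightarrow> 'b::t1_space"
  assumes "\<forall>i<n. 0 \<le> v i" "\<forall>i<n. 0 \<le> f (\<xi> i)"
  shows "enn2ereal (\<integral>\<^sup>+ x. e2ennreal (f x) \<partial>wemp n \<xi> v) = (\<Sum>i<n. ereal (v i) * f (\<xi> i))"
proof -
  have "enn2ereal (\<Sum>i<n. ennreal (v i) * e2ennreal (f (\<xi> i)))
      = (\<Sum>i<n. enn2ereal (ennreal (v i) * e2ennreal (f (\<xi> i))))"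
    by (rule sum_enn2ereal[symmetric]) simp
  also have "\<dots> = (\<Sum>i<n. ereal (v i) * f (\<xi> i))"
    using assms by (intro sum.cong refl) (simp add: times_ennreal.rep_eq enn2ereal_e2ennreal)
  finally show ?thesis by (simp only: nn_integral_wemp)
qed

lemma prob_on_wemp:
  fixes \<xi> :: "nat \<Rightarrow> 'b::t1_space"
  assumes "\<forall>i<n. 0 \<le> v i" "(\<Sum>i<n. v i) = 1" "S \<in> sets borel" "\<forall>i<n. \<xi> i \<in> S"
  shows "prob_on S (wemp n \<xi> v)"
proof -
  have total: "(\<Sum>i<n. ennreal (v i)) = 1" using assms(1,2) by (subst sum_ennreal) auto
  have "emeasure (wemp n \<xi> v) S = 1" "emeasure (wemp n \<xi> v) (space (wemp n \<xi> v)) = 1"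
    using assms(3,4) total by (simp_all add: emeasure_wemp space_wemp)
  then show ?thesis unfolding prob_on_def by (auto intro: prob_spaceI simp: sets_wemp)
qed

lemma hfun_nonneg:
  assumes "\<xi> \<in> S" "0 \<le> l \<theta> \<xi>" "d \<xi> \<xi> = 0"
  shows "0 \<le> hfun l d S p \<theta> lam \<xi>"
proof -
  have "ereal (l \<theta> \<xi> - lam * d \<xi> \<xi> powr p) \<le> hfun l d S p \<theta> lam \<xi>"
    unfolding hfun_def using assms(1) by (rule SUP_upper)
  then have "ereal (l \<theta> \<xi>) \<le> hfun l d S p \<theta> lam \<xi>" using assms(3) by simp
  with assms(2) show ?thesis by (meson ereal_less_eq(5) order_trans)
qed

lemma kappa_le_growth_constant:
  assumes "1 \<le> p" "0 < c" "0 \<le> l \<theta> \<xi>0"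
    and growth: "\<forall>\<zeta>\<in>S. l \<theta> \<zeta> \<le> c * (1 + d \<zeta> \<xi>0 powr p)"
  shows "kappa l d S p \<xi>0 \<theta> \<le> ereal c"
proof (rule ereal_le_epsilon2)
  fix \<delta> :: real assume "0 < \<delta>"
  have "(l \<theta> \<zeta> - l \<theta> \<xi>0) / d \<zeta> \<xi>0 powr p \<le> c + \<delta>"
    if "\<zeta> \<in> S" "max 1 (c / \<delta>) \<le> d \<zeta> \<xi>0" for \<zeta>
  proof -
    let ?P = "d \<zeta> \<xi>0 powr p"
    have D: "1 \<le> d \<zeta> \<xi>0" "c / \<delta> \<le> d \<zeta> \<xi>0" using that(2) by simp_all
    moreover have "d \<zeta> \<xi>0 \<le> ?P" using powr_mono[OF assms(1) \<open>1 \<le> d \<zeta> \<xi>0\<close>] by simp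
    ultimately have "1 \<le> ?P" "c / \<delta> \<le> ?P" by simp_all
    then have "0 < ?P" "c \<le> \<delta> * ?P" using \<open>0 < \<delta>\<close> D(1) by (simp_all add: pos_divide_le_eq mult.commute)
    moreover have "l \<theta> \<zeta> \<le> c + c * ?P" using growth that(1) by (simp add: distrib_left)
    ultimately have "l \<theta> \<zeta> - l \<theta> \<xi>0 \<le> (c + \<delta>) * ?P"
      using assms(3) by (simp add: distrib_right)
    with \<open>0 < ?P\<close> show ?thesis by (simp add: pos_divide_le_eq)
  qed
  then have "\<forall>\<^sub>F \<zeta> in filtercomap (\<lambda>\<zeta>. d \<zeta> \<xi>0) at_top \<sqinter> principal S.
      ereal ((l \<theta> \<zeta> - l \<theta> \<xi>0) / d \<zeta> \<xi>0 powr p) \<le> ereal c + ereal \<delta>"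
    unfolding eventually_inf_principal eventually_filtercomap_at_top_linorder
    by (intro exI[of _ "max 1 (c / \<delta>)"]) simp
  then show "kappa l d S p \<xi>0 \<theta> \<le> ereal c + ereal \<delta>"
    unfolding kappa_def by (rule Limsup_bounded)
qed

lemma far_point_above_kappa:
  assumes "ereal t < kappa l d S p \<xi>0 \<theta>"
  obtains \<zeta> where "\<zeta> \<in> S" "D \<le> d \<zeta> \<xi>0" "t < (l \<theta> \<zeta> - l \<theta> \<xi>0) / d \<zeta> \<xi>0 powr p"
proof (rule ccontr)
  assume "\<not> thesis"
  then have "\<forall>\<zeta>. D \<le> d \<zeta> \<xi>0 \<longrightarrow> \<zeta> \<in> S \<longrightarrow> (l \<theta> \<zeta> - l \<theta> \<xi>0) / d \<zeta> \<xi>0 powr p \<le> t"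
    using that by (meson not_less)
  then have "\<forall>\<^sub>F \<zeta> in filtercomap (\<lambda>\<zeta>. d \<zeta> \<xi>0) at_top \<sqinter> principal S.
      ereal ((l \<theta> \<zeta> - l \<theta> \<xi>0) / d \<zeta> \<xi>0 powr p) \<le> ereal t"
    unfolding eventually_inf_principal eventually_filtercomap_at_top_linorder by auto
  then have "kappa l d S p \<xi>0 \<theta> \<le> ereal t" unfolding kappa_def by (rule Limsup_bounded)
  with assms show False by simp
qed

lemma exists_powr_stretch_less:
  fixes a b p :: real
  assumes "a < b"
  obtains \<eta> where "0 < \<eta>" "a * (1 + \<eta>) powr p < b"
proof -
  have "((\<lambda>\<eta>. a * (1 + \<eta>) powr p) \<longlongrightarrow> a * (1 + 0) powr p) (at_right 0)"
    by (intro tendsto_intros) auto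
  then have "\<forall>\<^sub>F \<eta> in at_right 0. a * (1 + \<eta>) powr p < b"
    using assms by (intro order_tendstoD(2)) auto
  moreover have "\<forall>\<^sub>F \<eta> in at_right (0::real). 0 < \<eta>" by (simp add: eventually_at_right_less)
  ultimately have "\<exists>\<eta>. 0 < \<eta> \<and> a * (1 + \<eta>) powr p < b"
    by (intro eventually_happens'[OF trivial_limit_at_right_real eventually_conj])
  then show ?thesis using that by blast
qed

text \<open>Below \<open>\<kappa>\<close> the penalty loses against the growth of the loss: a point \<open>\<zeta>\<close> at distance \<open>r\<close>
  from \<open>\<xi>\<^sub>0\<close> on which the loss grows like \<open>k r\<^sup>p\<close> is at distance at most \<open>(1 + \<eta>) r\<close> from \<open>\<xi>\<close>,
  so its penalty is at most \<open>\<lambda> (1 + \<eta>)\<^sup>p r\<^sup>p < k' r\<^sup>p\<close> with \<open>k' < k\<close>.\<close>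
lemma hfun_eq_PInf_below_kappa:
  assumes p: "1 \<le> p" and lam: "0 \<le> lam" "ereal lam < kappa l d S p \<xi>0 \<theta>"
    and "0 \<le> l \<theta> \<xi>0"
    and nonneg: "\<forall>u v. 0 \<le> d u v" and triangle: "\<forall>u v w. d u w \<le> d u v + d v w"
  shows "hfun l d S p \<theta> lam \<xi> = \<infinity>"
proof -
  obtain k where k: "lam < k" "ereal k < kappa l d S p \<xi>0 \<theta>"
    using ereal_dense2[OF lam(2)] by auto
  define k' where "k' = (lam + k) / 2"
  have k': "lam < k'" "k' < k" using k by (simp_all add: k'_def)
  obtain \<eta> where \<eta>: "0 < \<eta>" "lam * (1 + \<eta>) powr p < k'"
    using exists_powr_stretch_less k'(1) by blast
  define c where "c = d \<xi>0 \<xi>"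
  show ?thesis
    unfolding hfun_def
  proof (rule SUP_PInfty)
    fix m :: nat
    obtain \<zeta> where "\<zeta> \<in> S" and far: "max (max 1 (c / \<eta>)) (m / (k - k')) \<le> d \<zeta> \<xi>0"
      and gain: "k < (l \<theta> \<zeta> - l \<theta> \<xi>0) / d \<zeta> \<xi>0 powr p"
      using far_point_above_kappa[OF k(2)] by blast
    define r where "r = d \<zeta> \<xi>0"
    have "1 \<le> r" "c \<le> r * \<eta>" "m \<le> r * (k - k')"
      using far \<eta>(1) k' by (simp_all add: r_def pos_divide_le_eq)
    have "r powr 1 \<le> r powr p" using \<open>1 \<le> r\<close> p by (intro powr_mono) auto
    then have "r \<le> r powr p" "0 < r powr p" using \<open>1 \<le> r\<close> by auto
    have "d \<zeta> \<xi> \<le> r + c" using triangle by (auto simp: r_def c_def)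
    also have "\<dots> \<le> (1 + \<eta>) * r" using \<open>c \<le> r * \<eta>\<close> by (simp add: algebra_simps)
    finally have "d \<zeta> \<xi> powr p \<le> ((1 + \<eta>) * r) powr p"
      using nonneg p by (intro powr_mono2) auto
    also have "\<dots> = (1 + \<eta>) powr p * r powr p" by (rule powr_mult)
    finally have "lam * d \<zeta> \<xi> powr p \<le> (lam * (1 + \<eta>) powr p) * r powr p"
      using lam(1) by (simp add: mult_left_mono mult.assoc)
    also have "\<dots> \<le> k' * r powr p" using \<eta>(2) \<open>0 < r powr p\<close> by (intro mult_right_mono) auto
    finally have penalty: "lam * d \<zeta> \<xi> powr p \<le> k' * r powr p" .
    have "r * (k - k') \<le> r powr p * (k - k')"
      using \<open>r \<le> r powr p\<close> k' by (intro mult_right_mono) auto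
    with \<open>m \<le> r * (k - k')\<close> have "real m \<le> r powr p * (k - k')" by (rule order_trans)
    moreover have "k * r powr p < l \<theta> \<zeta> - l \<theta> \<xi>0"
      using gain \<open>0 < r powr p\<close> by (simp add: r_def less_divide_eq)
    moreover have "r powr p * (k - k') = k * r powr p - k' * r powr p" by (simp add: algebra_simps)
    ultimately have "real m \<le> l \<theta> \<zeta> - lam * d \<zeta> \<xi> powr p"
      using penalty \<open>0 \<le> l \<theta> \<xi>0\<close> by linarith
    with \<open>\<zeta> \<in> S\<close> show "\<exists>\<zeta>\<in>S. ereal (real m) \<le> ereal (l \<theta> \<zeta> - lam * d \<zeta> \<xi> powr p)"
      by auto
  qed
qed

lemma hfun_le_at_growth_slope:
  assumes p: "1 \<le> p" and "0 < c" and \<rho>: "d \<xi> \<xi>0 \<le> \<rho>"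
    and nonneg: "\<forall>u v. 0 \<le> d u v" and triangle: "\<forall>u v w. d u w \<le> d u v + d v w"
    and growth: "\<forall>\<zeta>\<in>S. l \<theta> \<zeta> \<le> c * (1 + d \<zeta> \<xi>0 powr p)"
  shows "hfun l d S p \<theta> (c * 2 powr (p - 1)) \<xi> \<le> ereal (c * (1 + 2 powr (p - 1) * \<rho> powr p))"
  unfolding hfun_def
proof (rule SUP_least)
  fix \<zeta> assume "\<zeta> \<in> S"
  have "d \<zeta> \<xi>0 \<le> d \<zeta> \<xi> + \<rho>" using triangle \<rho> by (meson add_left_mono order_trans)
  then have "d \<zeta> \<xi>0 powr p \<le> (d \<zeta> \<xi> + \<rho>) powr p" using p nonneg by (intro powr_mono2) auto
  also have "\<dots> \<le> 2 powr (p - 1) * (d \<zeta> \<xi> powr p + \<rho> powr p)"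
    using nonneg \<rho> p by (intro powr_add_le) (auto intro: order_trans)
  finally have "c * (1 + d \<zeta> \<xi>0 powr p) \<le> c * (1 + 2 powr (p - 1) * (d \<zeta> \<xi> powr p + \<rho> powr p))"
    using \<open>0 < c\<close> by simp
  with growth \<open>\<zeta> \<in> S\<close> have "l \<theta> \<zeta> \<le> c * (1 + 2 powr (p - 1) * \<rho> powr p) + c * 2 powr (p - 1) * d \<zeta> \<xi> powr p"
    by (fastforce simp: distrib_left)
  then show "ereal (l \<theta> \<zeta> - c * 2 powr (p - 1) * d \<zeta> \<xi> powr p)
      \<le> ereal (c * (1 + 2 powr (p - 1) * \<rho> powr p))"
    by simp
qed

lemma INF_dual_objective_restrict:
  fixes v :: "nat \<Rightarrow> real"
  assumes p: "1 \<le> p" and "0 < \<sigma>" "0 < c"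
    and nonneg: "\<forall>u v. 0 \<le> d u v" and self: "\<forall>u. d u u = 0"
    and triangle: "\<forall>u v w. d u w \<le> d u v + d v w"
    and l_nonneg: "\<forall>\<zeta>\<in>S. 0 \<le> l \<theta> \<zeta>" and "\<xi>0 \<in> S"
    and growth: "\<forall>\<zeta>\<in>S. l \<theta> \<zeta> \<le> c * (1 + d \<zeta> \<xi>0 powr p)"
    and v: "\<forall>i<n. 0 \<le> v i" "(\<Sum>i<n. v i) = 1"
    and data: "\<forall>i<n. \<xi> i \<in> S \<and> d (\<xi> i) \<xi>0 \<le> \<rho>"
  defines "\<tau> \<equiv> c * (2 powr (p - 1) + (1 + 2 powr (p - 1) * \<rho> powr p) / \<sigma> powr p)"
  shows "(INF lam\<in>{0..}. ereal (lam * \<sigma> powr p) + (\<Sum>i<n. ereal (v i) * hfun l d S p \<theta> lam (\<xi> i)))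
       = (INF lam\<in>{lam. 0 \<le> lam \<and> kappa l d S p \<xi>0 \<theta> \<le> ereal lam \<and> lam \<le> \<tau>}.
            ereal (lam * \<sigma> powr p) + (\<Sum>i<n. ereal (v i) * hfun l d S p \<theta> lam (\<xi> i)))"
    (is "(INF lam\<in>_. ?F lam) = (INF lam\<in>?J. ?F lam)")
proof -
  define a where "a = c * 2 powr (p - 1)"
  define K where "K = c * (1 + 2 powr (p - 1) * \<rho> powr p)"
  obtain j where "j < n" "0 < v j"
  proof (rule ccontr)
    assume "\<not> thesis"
    with that have "(\<Sum>i<n. v i) \<le> 0" by (intro sum_nonpos) (meson lessThan_iff not_less)
    with v(2) show False by simp
  qed
  then have "0 \<le> \<rho>" using nonneg data by (meson order_trans)
  have first_le: "ereal (lam * \<sigma> powr p) \<le> ?F lam" for lam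
    using v(1) data self l_nonneg
    by (intro add_increasing2 sum_nonneg ereal_0_le_mult hfun_nonneg) auto
  have "a \<in> ?J"
  proof -
    have "c \<le> a" using \<open>0 < c\<close> p by (simp add: a_def ge_one_powr_ge_zero)
    moreover have "kappa l d S p \<xi>0 \<theta> \<le> ereal c"
      using p \<open>0 < c\<close> l_nonneg \<open>\<xi>0 \<in> S\<close> growth by (intro kappa_le_growth_constant) auto
    moreover have "a \<le> \<tau>" using \<open>0 < c\<close> \<open>0 \<le> \<rho>\<close> by (simp add: \<tau>_def a_def distrib_left)
    ultimately show ?thesis using \<open>0 < c\<close> by (auto intro: order_trans)
  qed
  have "?F a \<le> ereal (\<tau> * \<sigma> powr p)"
  proof -
    have "hfun l d S p \<theta> a (\<xi> i) \<le> ereal K" if "i < n" for i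
      unfolding a_def K_def using p \<open>0 < c\<close> data that nonneg triangle growth
      by (intro hfun_le_at_growth_slope) auto
    then have "(\<Sum>i<n. ereal (v i) * hfun l d S p \<theta> a (\<xi> i)) \<le> (\<Sum>i<n. ereal (v i) * ereal K)"
      using v(1) by (intro sum_mono ereal_mult_left_mono) auto
    also have "\<dots> = ereal K" using v(2) by (simp add: sum_distrib_right[symmetric])
    finally have "?F a \<le> ereal (a * \<sigma> powr p) + ereal K" by (rule add_left_mono)
    moreover have "\<tau> * \<sigma> powr p = a * \<sigma> powr p + K"
      using \<open>0 < \<sigma>\<close> by (simp add: \<tau>_def a_def K_def field_simps)
    ultimately show ?thesis by simp
  qed
  have "(INF lam\<in>?J. ?F lam) \<le> ?F lam" if "0 \<le> lam" for lam
  proof (cases "kappa l d S p \<xi>0 \<theta> \<le> ereal lam")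
    case False
    have "hfun l d S p \<theta> lam (\<xi> j) = \<infinity>"
      using p that False l_nonneg \<open>\<xi>0 \<in> S\<close> nonneg triangle by (intro hfun_eq_PInf_below_kappa) auto
    with \<open>j < n\<close> \<open>0 < v j\<close> have "?F lam = \<infinity>" by (auto simp: sum_Pinfty)
    then show ?thesis by simp
  next
    case True
    show ?thesis
    proof (cases "lam \<le> \<tau>")
      case False
      have "(INF lam\<in>?J. ?F lam) \<le> ?F a" using \<open>a \<in> ?J\<close> by (rule INF_lower)
      also have "\<dots> \<le> ereal (lam * \<sigma> powr p)"
        using \<open>?F a \<le> ereal (\<tau> * \<sigma> powr p)\<close> False \<open>0 < \<sigma>\<close> by (simp add: order_trans)
      also have "\<dots> \<le> ?F lam" by (rule first_le)
      finally show ?thesis .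
    qed (use that True in \<open>auto intro: INF_lower\<close>)
  qed
  then show ?thesis
    by (intro antisym INF_greatest INF_superset_mono) auto
qed

lemma wrisk_wemp_eq_INF_dual_objective:
  fixes \<xi> :: "nat \<Rightarrow> 'b::t1_space" and v :: "nat \<Rightarrow> real"
  assumes duality: "\<forall>Q. prob_on S Q \<and> (\<integral>\<^sup>+ \<zeta>. ennreal (d \<zeta> \<xi>0 powr p) \<partial>Q) < \<infinity> \<longrightarrow>
      wrisk l d S p \<sigma> Q \<theta> = (INF lam\<in>{0..}. ereal (lam * \<sigma> powr p)
        + enn2ereal (\<integral>\<^sup>+ \<zeta>. e2ennreal (hfun l d S p \<theta> lam \<zeta>) \<partial>Q))"
    and "S \<in> sets borel"
    and p: "1 \<le> p" and "0 < \<sigma>" "0 < c"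
    and nonneg: "\<forall>u v. 0 \<le> d u v" and self: "\<forall>u. d u u = 0"
    and triangle: "\<forall>u v w. d u w \<le> d u v + d v w"
    and l_nonneg: "\<forall>\<zeta>\<in>S. 0 \<le> l \<theta> \<zeta>" and "\<xi>0 \<in> S"
    and growth: "\<forall>\<zeta>\<in>S. l \<theta> \<zeta> \<le> c * (1 + d \<zeta> \<xi>0 powr p)"
    and v: "\<forall>i<n. 0 \<le> v i" "(\<Sum>i<n. v i) = 1"
    and data: "\<forall>i<n. \<xi> i \<in> S \<and> d (\<xi> i) \<xi>0 \<le> \<rho>"
  shows "wrisk l d S p \<sigma> (wemp n \<xi> v) \<theta>
    = (INF lam\<in>{lam. 0 \<le> lam \<and> kappa l d S p \<xi>0 \<theta> \<le> ereal lam
          \<and> lam \<le> c * (2 powr (p - 1) + (1 + 2 powr (p - 1) * \<rho> powr p) / \<sigma> powr p)}.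
        ereal (lam * \<sigma> powr p) + (\<Sum>i<n. ereal (v i) * hfun l d S p \<theta> lam (\<xi> i)))"
    (is "_ = ?restricted")
proof -
  have "prob_on S (wemp n \<xi> v)" using v \<open>S \<in> sets borel\<close> data by (intro prob_on_wemp) auto
  moreover have "(\<integral>\<^sup>+ \<zeta>. ennreal (d \<zeta> \<xi>0 powr p) \<partial>wemp n \<xi> v) < \<infinity>"
    by (simp add: nn_integral_wemp ennreal_mult_less_top)
  moreover have "enn2ereal (\<integral>\<^sup>+ \<zeta>. e2ennreal (hfun l d S p \<theta> lam \<zeta>) \<partial>wemp n \<xi> v)
      = (\<Sum>i<n. ereal (v i) * hfun l d S p \<theta> lam (\<xi> i))" for lam
    using v(1) data self l_nonneg by (intro enn2ereal_nn_integral_wemp allI impI hfun_nonneg) auto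
  ultimately have "wrisk l d S p \<sigma> (wemp n \<xi> v) \<theta> = (INF lam\<in>{0..}. ereal (lam * \<sigma> powr p)
      + (\<Sum>i<n. ereal (v i) * hfun l d S p \<theta> lam (\<xi> i)))"
    using duality by simp
  also have "\<dots> = ?restricted"
    using p \<open>0 < \<sigma>\<close> \<open>0 < c\<close> nonneg self triangle l_nonneg \<open>\<xi>0 \<in> S\<close> growth v data
    by (rule INF_dual_objective_restrict)
  finally show ?thesis .
qed

lemma scaled_INF_le_INF:
  fixes g :: "'a \<Rightarrow> real" and G G' :: "'a \<Rightarrow> ereal"
  assumes "0 \<le> c" "c \<le> 1" and "\<forall>x\<in>J. 0 \<le> g x \<and> 0 \<le> G x \<and> ereal c * G x \<le> G' x"
  shows "ereal c * (INF x\<in>J. ereal (g x) + G x) \<le> (INF x\<in>J. ereal (g x) + G' x)"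
proof (rule INF_greatest)
  fix x assume "x \<in> J"
  then have "ereal c * (INF x\<in>J. ereal (g x) + G x) \<le> ereal c * (ereal (g x) + G x)"
    using assms(1) by (intro ereal_mult_left_mono INF_lower) auto
  also have "\<dots> = ereal (c * g x) + ereal c * G x"
    using assms \<open>x \<in> J\<close> by (subst ereal_distrib_left) auto
  also have "\<dots> \<le> ereal (g x) + G' x"
    using assms \<open>x \<in> J\<close> by (intro add_mono) (auto simp: mult_left_le_one_le)
  finally show "ereal c * (INF x\<in>J. ereal (g x) + G x) \<le> ereal (g x) + G' x" .
qed

lemma INF_dual_objective_sandwich:
  fixes g :: "'a \<Rightarrow> real" and G G' :: "'a \<Rightarrow> ereal"
  assumes "0 < \<epsilon>" "\<epsilon> < 1"
    and "\<forall>x\<in>J. 0 \<le> g x \<and> 0 \<le> G x \<and> ereal (1 - \<epsilon>) * G x \<le> G' x \<and> G' x \<le> ereal (1 + \<epsilon>) * G x"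
  shows "ereal (1 - \<epsilon>) * (INF x\<in>J. ereal (g x) + G x) \<le> (INF x\<in>J. ereal (g x) + G' x)"
    and "ereal (1 / (1 + \<epsilon>)) * (INF x\<in>J. ereal (g x) + G' x) \<le> (INF x\<in>J. ereal (g x) + G x)"
proof -
  show "ereal (1 - \<epsilon>) * (INF x\<in>J. ereal (g x) + G x) \<le> (INF x\<in>J. ereal (g x) + G' x)"
    using assms by (intro scaled_INF_le_INF) auto
  have "ereal (1 / (1 + \<epsilon>)) * G' x \<le> G x" if "x \<in> J" for x
  proof -
    have "ereal (1 / (1 + \<epsilon>)) * G' x \<le> ereal (1 / (1 + \<epsilon>)) * (ereal (1 + \<epsilon>) * G x)"
      using assms that by (intro ereal_mult_left_mono) auto
    also have "\<dots> = G x" using assms(1) by (simp add: mult.assoc[symmetric])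
    finally show ?thesis .
  qed
  moreover have "0 \<le> G' x" if "x \<in> J" for x
  proof -
    have "0 \<le> ereal (1 - \<epsilon>) * G x" using assms that by (intro ereal_0_le_mult) auto
    with assms that show ?thesis by (blast intro: order_trans)
  qed
  ultimately show "ereal (1 / (1 + \<epsilon>)) * (INF x\<in>J. ereal (g x) + G' x) \<le> (INF x\<in>J. ereal (g x) + G x)"
    using assms by (intro scaled_INF_le_INF) auto
qed

lemma approximate_minimizer_transfer:
  fixes R R' :: "'a \<Rightarrow> ereal"
  assumes "0 < a" "0 < b" "0 \<le> \<alpha>"
    and comparable: "\<forall>\<theta>\<in>\<Theta>. ereal a * R \<theta> \<le> R' \<theta> \<and> ereal b * R' \<theta> \<le> R \<theta>"
    and "\<theta>0 \<in> \<Theta>" and approx: "R' \<theta>0 \<le> ereal \<alpha> * (INF \<theta>\<in>\<Theta>. R' \<theta>)"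
  shows "R \<theta>0 \<le> ereal (\<alpha> / (a * b)) * (INF \<theta>\<in>\<Theta>. R \<theta>)"
proof -
  have cancel: "ereal (1 / x) * (ereal x * y) = y" if "0 < x" for x y
    using that by (simp add: mult.assoc[symmetric])
  have "ereal b * (INF \<theta>\<in>\<Theta>. R' \<theta>) \<le> (INF \<theta>\<in>\<Theta>. R \<theta>)"
  proof (rule INF_greatest)
    fix \<theta> assume "\<theta> \<in> \<Theta>"
    then have "ereal b * (INF \<theta>\<in>\<Theta>. R' \<theta>) \<le> ereal b * R' \<theta>"
      using assms(2) by (intro ereal_mult_left_mono INF_lower) auto
    with comparable \<open>\<theta> \<in> \<Theta>\<close> show "ereal b * (INF \<theta>\<in>\<Theta>. R' \<theta>) \<le> R \<theta>" by (auto intro: order_trans)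
  qed
  then have "ereal (1 / b) * (ereal b * (INF \<theta>\<in>\<Theta>. R' \<theta>)) \<le> ereal (1 / b) * (INF \<theta>\<in>\<Theta>. R \<theta>)"
    using assms(2) by (intro ereal_mult_left_mono) auto
  then have "ereal \<alpha> * (INF \<theta>\<in>\<Theta>. R' \<theta>) \<le> ereal \<alpha> * (ereal (1 / b) * (INF \<theta>\<in>\<Theta>. R \<theta>))"
    using assms(2,3) cancel by (intro ereal_mult_left_mono) auto
  with comparable \<open>\<theta>0 \<in> \<Theta>\<close> approx
  have "ereal a * R \<theta>0 \<le> ereal \<alpha> * (ereal (1 / b) * (INF \<theta>\<in>\<Theta>. R \<theta>))"
    by (blast intro: order_trans)
  then have "ereal (1 / a) * (ereal a * R \<theta>0)
      \<le> ereal (1 / a) * (ereal \<alpha> * (ereal (1 / b) * (INF \<theta>\<in>\<Theta>. R \<theta>)))"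
    using assms(1) by (intro ereal_mult_left_mono) auto
  then show ?thesis
    using assms(1,2) cancel by (simp add: mult.assoc[symmetric])
qed

theorem corollary1:
  fixes nrm :: "'a::euclidean_space \<Rightarrow> real"
    and \<gamma> p \<sigma> \<epsilon> \<alpha> :: real
    and X :: "'a set" and Y :: "real set"
    and n :: nat and \<xi> :: "nat \<Rightarrow> 'a \<times> real" and w :: "nat \<Rightarrow> real"
    and l :: "'c::euclidean_space \<Rightarrow> 'a \<times> real \<Rightarrow> real" and \<Theta> :: "'c set"
    and C :: "'c \<Rightarrow> real" and \<xi>0 :: "'a \<times> real" and \<theta>0 :: 'c
    and \<Xi> :: "('a \<times> real) set" and d :: "'a \<times> real \<Rightarrow> 'a \<times> real \<Rightarrow> real"
    and h :: "'c \<Rightarrow> real \<Rightarrow> 'a \<times> real \<Rightarrow> ereal"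
    and H Ht :: "'c \<Rightarrow> real \<Rightarrow> ereal" and \<rho> :: real and \<tau> :: "'c \<Rightarrow> real"
    and R :: "('a \<times> real) measure \<Rightarrow> 'c \<Rightarrow> ereal" and Pn Pt :: "('a \<times> real) measure"
  assumes "\<Xi> = X \<times> Y"
    and "d = dxi nrm \<gamma>"
    and "h = hfun l d \<Xi> p"
    and "H = (\<lambda>\<theta> lam. ereal (1 / real n) * (\<Sum>i<n. h \<theta> lam (\<xi> i)))"
    and "Ht = (\<lambda>\<theta> lam. \<Sum>i<n. ereal (w i) * h \<theta> lam (\<xi> i))"
    and "\<rho> = Max ((\<lambda>i. d (\<xi> i) \<xi>0) ` {..<n})"
    and "\<tau> = (\<lambda>\<theta>. C \<theta> * (2 powr (p - 1) + (1 + 2 powr (p - 1) * \<rho> powr p) / \<sigma> powr p))"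
    and "R = wrisk l d \<Xi> p \<sigma>"
    and "Pn = wemp n \<xi> (\<lambda>_. 1 / real n)"
    and "Pt = wemp n \<xi> w"
    and norm: "is_norm nrm"
    and gamma_pos: "\<gamma> > 0"
    and complete: "d_complete d \<Xi>"
    and p_ge: "p \<ge> 1" and sigma_pos: "\<sigma> > 0"
    and n_pos: "n \<ge> 1" and data: "\<forall>i<n. \<xi> i \<in> \<Xi>"
    and l_nonneg: "\<forall>\<theta> \<zeta>. \<zeta> \<in> \<Xi> \<longrightarrow> l \<theta> \<zeta> \<ge> 0"
    and l_cont: "\<forall>\<theta>\<in>\<Theta>. continuous_on \<Xi> (l \<theta>)"
    and C_pos: "\<forall>\<theta>. C \<theta> > 0" and C_cont: "continuous_on UNIV C"
    and xi0: "\<xi>0 \<in> \<Xi>"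
    and growth: "\<forall>\<theta>\<in>\<Theta>. \<forall>\<zeta>\<in>\<Xi>. l \<theta> \<zeta> \<le> C \<theta> * (1 + d \<zeta> \<xi>0 powr p)"
    and kappa_fin: "\<forall>\<theta>\<in>\<Theta>. \<bar>kappa l d \<Xi> p \<xi>0 \<theta>\<bar> \<noteq> \<infinity> \<and>
                      (\<forall>i<n. h \<theta> (real_of_ereal (kappa l d \<Xi> p \<xi>0 \<theta>)) (\<xi> i) < \<infinity>)"
    and duality: "\<forall>\<theta>\<in>\<Theta>. \<forall>Q. prob_on \<Xi> Q \<and> (\<integral>\<^sup>+ \<zeta>. ennreal (d \<zeta> \<xi>0 powr p) \<partial>Q) < \<infinity> \<longrightarrow>
                    R Q \<theta> = (INF lam\<in>{0..}. ereal (lam * \<sigma> powr p)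
                                + enn2ereal (\<integral>\<^sup>+ \<zeta>. e2ennreal (h \<theta> lam \<zeta>) \<partial>Q))"
    and eps: "0 < \<epsilon>" "\<epsilon> < 1" and alpha: "\<alpha> \<ge> 1"
    and w_nonneg: "\<forall>i<n. w i \<ge> 0" and w_sum: "(\<Sum>i<n. w i) = 1"
    and coreset: "\<forall>\<theta>\<in>\<Theta>. \<forall>lam::real. kappa l d \<Xi> p \<xi>0 \<theta> \<le> ereal lam \<and> lam \<le> \<tau> \<theta> \<longrightarrow>
                    ereal (1 - \<epsilon>) * H \<theta> lam \<le> Ht \<theta> lam \<and> Ht \<theta> lam \<le> ereal (1 + \<epsilon>) * H \<theta> lam"
    and theta0: "\<theta>0 \<in> \<Theta>"
    and approx: "R Pt \<theta>0 \<le> ereal \<alpha> * (INF \<theta>\<in>\<Theta>. R Pt \<theta>)"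
  shows "R Pn \<theta>0 \<le> ereal (\<alpha> * (1 + \<epsilon>) / (1 - \<epsilon>)) * (INF \<theta>\<in>\<Theta>. R Pn \<theta>)"
proof -
  have nonneg: "\<forall>u v. 0 \<le> d u v" and self: "\<forall>u. d u u = 0"
    and triangle: "\<forall>u v w. d u w \<le> d u v + d v w"
    using dxi_nonneg[OF norm gamma_pos] dxi_self[OF norm gamma_pos] dxi_triangle[OF norm gamma_pos]
    by (simp_all add: assms(2))
  have "\<Xi> \<in> sets borel"
    using dxi_complete_imp_closed[OF norm gamma_pos] complete by (simp add: assms(2) borel_closed)
  have l_nonneg': "\<forall>\<zeta>\<in>\<Xi>. 0 \<le> l \<theta> \<zeta>" for \<theta> using l_nonneg by blast
  have data': "\<forall>i<n. \<xi> i \<in> \<Xi> \<and> d (\<xi> i) \<xi>0 \<le> \<rho>" using data by (simp add: assms(6))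
  define J where "J \<theta> = {lam. 0 \<le> lam \<and> kappa l d \<Xi> p \<xi>0 \<theta> \<le> ereal lam \<and> lam \<le> \<tau> \<theta>}" for \<theta>
  have risk: "R (wemp n \<xi> v) \<theta>
      = (INF lam\<in>J \<theta>. ereal (lam * \<sigma> powr p) + (\<Sum>i<n. ereal (v i) * h \<theta> lam (\<xi> i)))"
    if "\<theta> \<in> \<Theta>" "\<forall>i<n. 0 \<le> v i" "(\<Sum>i<n. v i) = 1" for \<theta> v
    using wrisk_wemp_eq_INF_dual_objective[OF bspec[OF duality that(1), unfolded assms(3,8)]
        \<open>\<Xi> \<in> sets borel\<close> p_ge sigma_pos C_pos[rule_format] nonneg self triangle
        l_nonneg' xi0 bspec[OF growth that(1)] that(2,3) data']
    by (simp add: J_def assms(3,7,8))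
  have "ereal (1 - \<epsilon>) * R Pn \<theta> \<le> R Pt \<theta> \<and> ereal (1 / (1 + \<epsilon>)) * R Pt \<theta> \<le> R Pn \<theta>"
    if "\<theta> \<in> \<Theta>" for \<theta>
  proof -
    have H: "H \<theta> lam = (\<Sum>i<n. ereal (1 / real n) * h \<theta> lam (\<xi> i))" for lam
      using sum_distrib_right_ereal[of "1 / real n" "\<lambda>i. h \<theta> lam (\<xi> i)" "{..<n}"]
      by (simp add: assms(4) mult.commute)
    have "0 \<le> h \<theta> lam (\<xi> i)" if "i < n" for lam i
      unfolding assms(3) using data that self l_nonneg' by (blast intro: hfun_nonneg)
    then have "0 \<le> H \<theta> lam" for lam
      unfolding H by (intro sum_nonneg ereal_0_le_mult) auto
    with coreset that have sandwich: "\<forall>lam\<in>J \<theta>. 0 \<le> lam * \<sigma> powr p \<and> 0 \<le> H \<theta> lam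
        \<and> ereal (1 - \<epsilon>) * H \<theta> lam \<le> Ht \<theta> lam \<and> Ht \<theta> lam \<le> ereal (1 + \<epsilon>) * H \<theta> lam"
      by (simp add: J_def)
    have "R Pn \<theta> = (INF lam\<in>J \<theta>. ereal (lam * \<sigma> powr p) + H \<theta> lam)"
      using risk[OF that, of "\<lambda>_. 1 / real n"] n_pos by (simp add: assms(9) H)
    moreover have "R Pt \<theta> = (INF lam\<in>J \<theta>. ereal (lam * \<sigma> powr p) + Ht \<theta> lam)"
      using risk[OF that w_nonneg w_sum] by (simp add: assms(5,10))
    ultimately show ?thesis using INF_dual_objective_sandwich[OF eps sandwich] by simp
  qed
  then have "R Pn \<theta>0 \<le> ereal (\<alpha> / ((1 - \<epsilon>) * (1 / (1 + \<epsilon>)))) * (INF \<theta>\<in>\<Theta>. R Pn \<theta>)"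
    using eps alpha by (intro approximate_minimizer_transfer[OF _ _ _ _ theta0 approx]) auto
  then show ?thesis by simp
qed

end
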